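(* Let $\mathcal{C}$ be a complex algebra, $A,B\subseteq\mathcal{C}$ subalgebras, $\rho:A\to B$, $\psi:B\to A$ and $\mathfrak e:\mathcal C\to\mathcal C$ linear maps such that $(A,B)$ is right-liberated with respect to $(\mathfrak e,\rho,\psi)$. Let $\langle A,B\rangle$ be the subalgebra of $\mathcal C$ generated by $A\cup B$. Then $\mathfrak e[\langle A,B\rangle]=\mathfrak e[B]$.
   Context: $(A,B)$ is right-liberated with respect to $(\mathfrak e,\rho,\psi)$ if $\mathfrak e$ is a $B$-bimodule map ($\mathfrak e[b_1yb_2]=b_1\mathfrak e[y]b_2$ for $b_1,b_2\in B$, $y\in\mathcal C$) and for every $n\ge1$, $a_1,\dots,a_n\in A$, $b_1,\dots,b_{n-1}\in B$: $\mathfrak e\big[(a_1-\rho(a_1))(b_1-\psi(b_1))(a_2-\rho(a_2))\cdots(b_{n-1}-\psi(b_{n-1}))(a_n-\rho(a_n))\big]=0.$ *)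

theory Defs
  imports Complex_Main
begin

definition complex_algebra :: "(complex \<Rightarrow> 'c::ring_1 \<Rightarrow> 'c) \<Rightarrow> bool" where
  "complex_algebra smul \<longleftrightarrow>
     Vector_Spaces.vector_space smul \<and>
     (\<forall>c x y. smul c (x * y) = smul c x * y \<and> smul c (x * y) = x * smul c y)"

definition subalgebra :: "(complex \<Rightarrow> 'c::ring_1 \<Rightarrow> 'c) \<Rightarrow> 'c set \<Rightarrow> bool" where
  "subalgebra smul S \<longleftrightarrow> 0 \<in> S \<and> 1 \<in> S \<and>
     (\<forall>x\<in>S. \<forall>y\<in>S. x + y \<in> S \<and> x * y \<in> S) \<and>
     (\<forall>c. \<forall>x\<in>S. smul c x \<in> S)"

definition generated_subalgebra :: "(complex \<Rightarrow> 'c::ring_1 \<Rightarrow> 'c) \<Rightarrow> 'c set \<Rightarrow> 'c set" where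
  "generated_subalgebra smul X = \<Inter>{S. subalgebra smul S \<and> X \<subseteq> S}"

definition linear_on :: "(complex \<Rightarrow> 'c::ring_1 \<Rightarrow> 'c) \<Rightarrow> 'c set \<Rightarrow> ('c \<Rightarrow> 'c) \<Rightarrow> bool" where
  "linear_on smul S f \<longleftrightarrow>
     (\<forall>x\<in>S. \<forall>y\<in>S. f (x + y) = f x + f y) \<and> (\<forall>c. \<forall>x\<in>S. f (smul c x) = smul c (f x))"

text \<open>The alternating product
  (a_0 - rho a_0)(b_0 - psi b_0)(a_1 - rho a_1) ... (b_{n-2} - psi b_{n-2})(a_{n-1} - rho a_{n-1}).\<close>
definition alt_word :: "('c::ring_1 \<Rightarrow> 'c) \<Rightarrow> ('c \<Rightarrow> 'c) \<Rightarrow> nat \<Rightarrow> (nat \<Rightarrow> 'c) \<Rightarrow> (nat \<Rightarrow> 'c) \<Rightarrow> 'c" where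
  "alt_word \<rho> \<psi> n a b =
     prod_list (map (\<lambda>i. (a i - \<rho> (a i)) * (if i + 1 < n then b i - \<psi> (b i) else 1)) [0..<n])"

definition right_liberated ::
  "'c::ring_1 set \<Rightarrow> 'c set \<Rightarrow> ('c \<Rightarrow> 'c) \<Rightarrow> ('c \<Rightarrow> 'c) \<Rightarrow> ('c \<Rightarrow> 'c) \<Rightarrow> bool" where
  "right_liberated A B e \<rho> \<psi> \<longleftrightarrow>
     (\<forall>b1\<in>B. \<forall>b2\<in>B. \<forall>y. e (b1 * y * b2) = b1 * e y * b2) \<and>
     (\<forall>n\<ge>1. \<forall>a b. (\<forall>i<n. a i \<in> A) \<longrightarrow> (\<forall>i. i + 1 < n \<longrightarrow> b i \<in> B) \<longrightarrow>
        e (alt_word \<rho> \<psi> n a b) = 0)"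

end

theory Submission
  imports Defs
begin

text \<open>Every element of the generated subalgebra is a linear combination of words
  b a1 b1 a2 ... am b' with ai \<in> A and b, bi, b' \<in> B. Expanding the centred word
  (a1 - \<rho> a1)(b1 - \<psi> b1) ... (am - \<rho> am) shows that it differs from a1 b1 ... am by
  a combination of words with fewer letters from A, because \<rho> ai \<in> B and \<psi> bi \<in> A merge
  with their neighbours. Since e vanishes on centred words and is a B-bimodule map,
  induction on m gives e(a1 b1 ... am) \<in> e[B].\<close>

lemma alt_word_0 [simp]: "alt_word \<rho> \<psi> 0 a b = 1"
  unfolding alt_word_def by simp

lemma alt_word_1 [simp]: "alt_word \<rho> \<psi> (Suc 0) a b = a 0 - \<rho> (a 0)"
  unfolding alt_word_def by simp

lemma alt_word_Suc_Suc:
  "alt_word \<rho> \<psi> (Suc (Suc n)) a b =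
     (a 0 - \<rho> (a 0)) * (b 0 - \<psi> (b 0)) * alt_word \<rho> \<psi> (Suc n) (a \<circ> Suc) (b \<circ> Suc)"
proof -
  have "[0..<Suc (Suc n)] = 0 # map Suc [0..<Suc n]"
    by (metis map_Suc_upt upt_conv_Cons zero_less_Suc)
  then show ?thesis
    unfolding alt_word_def comp_def by (simp add: mult.assoc comp_def del: upt_Suc)
qed

definition word :: "nat \<Rightarrow> (nat \<Rightarrow> 'c::ring_1) \<Rightarrow> (nat \<Rightarrow> 'c) \<Rightarrow> 'c" where
  "word n a b = alt_word (\<lambda>_. 0) (\<lambda>_. 0) n a b"

lemma word_0 [simp]: "word 0 a b = 1"
  and word_1 [simp]: "word (Suc 0) a b = a 0"
  and word_Suc_Suc: "word (Suc (Suc n)) a b = a 0 * b 0 * word (Suc n) (a \<circ> Suc) (b \<circ> Suc)"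
  unfolding word_def by (simp_all add: alt_word_Suc_Suc)

locale complex_alg =
  fixes smul :: "complex \<Rightarrow> 'c::ring_1 \<Rightarrow> 'c"
  assumes complex_algebra: "complex_algebra smul"
begin

sublocale module smul
  using complex_algebra module_iff_vector_space unfolding complex_algebra_def by blast

lemma scale_mult_left: "smul c (x * y) = smul c x * y"
  and scale_mult_right: "smul c (x * y) = x * smul c y"
  using complex_algebra unfolding complex_algebra_def by blast+

lemma subspace_subalgebra: "subalgebra smul S \<Longrightarrow> subspace S"
  unfolding subalgebra_def subspace_def by blast

lemma mult_left_span:
  assumes "\<And>w. w \<in> S \<Longrightarrow> x * w \<in> span T" and "y \<in> span S"
  shows "x * y \<in> span T"
proof -
  interpret mult_x: module_hom smul smul "(*) x"
    by unfold_locales (simp_all add: distrib_left scale_mult_right)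
  have "(*) x ` span S \<subseteq> span T"
    using assms(1) mult_x.spans_image[of "span S" S] span_mono[of "(*) x ` S" "span T"]
    by (auto simp: span_span)
  with assms(2) show ?thesis by blast
qed

text \<open>The left multipliers of V form a subalgebra, which contains X and hence the
  generated subalgebra; multiplying 1 \<in> V shows that it lies in V.\<close>
lemma generated_subalgebra_subset:
  assumes "subspace V" and "1 \<in> V" and "\<And>x v. x \<in> X \<Longrightarrow> v \<in> V \<Longrightarrow> x * v \<in> V"
  shows "generated_subalgebra smul X \<subseteq> V"
proof -
  define M where "M = {x. \<forall>v\<in>V. x * v \<in> V}"
  have "subalgebra smul M"
    unfolding subalgebra_def M_def using assms(1)
    by (auto simp: distrib_right mult.assoc scale_mult_left[symmetric]
             intro: subspace_0 subspace_add subspace_scale)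
  moreover have "X \<subseteq> M"
    using assms(3) unfolding M_def by blast
  ultimately have "generated_subalgebra smul X \<subseteq> M"
    unfolding generated_subalgebra_def by blast
  then show ?thesis
    using assms(2) unfolding M_def by force
qed

end

locale subalgebra_pair = complex_alg smul
  for smul :: "complex \<Rightarrow> 'c::ring_1 \<Rightarrow> 'c" +
  fixes A B :: "'c set"
  assumes subalgebra_A: "subalgebra smul A" and subalgebra_B: "subalgebra smul B"
begin

lemma mult_A: "x \<in> A \<Longrightarrow> y \<in> A \<Longrightarrow> x * y \<in> A"
  using subalgebra_A unfolding subalgebra_def by auto

lemma one_B: "1 \<in> B" and mult_B: "x \<in> B \<Longrightarrow> y \<in> B \<Longrightarrow> x * y \<in> B"
  using subalgebra_B unfolding subalgebra_def by auto

definition word_letters :: "nat \<Rightarrow> (nat \<Rightarrow> 'c) \<Rightarrow> (nat \<Rightarrow> 'c) \<Rightarrow> bool" where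
  "word_letters n a b \<longleftrightarrow> (\<forall>i<n. a i \<in> A) \<and> (\<forall>i. i + 1 < n \<longrightarrow> b i \<in> B)"

lemma word_letters_Suc_Suc:
  "word_letters (Suc (Suc n)) a b \<longleftrightarrow> a 0 \<in> A \<and> b 0 \<in> B \<and> word_letters (Suc n) (a \<circ> Suc) (b \<circ> Suc)"
  unfolding word_letters_def by (auto simp: less_Suc_eq_0_disj)

definition words :: "nat \<Rightarrow> 'c set" where
  "words n = {b * word m a \<beta> * b' | b b' m a \<beta>. b \<in> B \<and> b' \<in> B \<and> m \<le> n \<and> word_letters m a \<beta>}"

lemma B_subset_words: "B \<subseteq> words n"
proof
  fix b assume "b \<in> B"
  then have "b * word 0 (\<lambda>_. 0) (\<lambda>_. 0) * 1 \<in> words n"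
    unfolding words_def word_letters_def using one_B by blast
  then show "b \<in> words n" by simp
qed

lemma words_mono: "m \<le> n \<Longrightarrow> words m \<subseteq> words n"
  unfolding words_def by fastforce

lemma word_in_words: "word_letters n a b \<Longrightarrow> word n a b \<in> words n"
  unfolding words_def using one_B by force

lemma mult_B_words:
  assumes "b \<in> B" and "w \<in> words n"
  shows "b * w \<in> words n"
proof -
  obtain c c' m a \<beta> where "w = c * word m a \<beta> * c'" "c \<in> B" "c' \<in> B" "m \<le> n" "word_letters m a \<beta>"
    using assms(2) unfolding words_def by blast
  moreover from this have "b * w = (b * c) * word m a \<beta> * c'" and "b * c \<in> B"
    using assms(1) by (simp_all add: mult.assoc mult_B)
  ultimately show ?thesis
    unfolding words_def by blast
qed

lemma mult_A_words:
  assumes x: "x \<in> A" and w: "w \<in> words n"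
  shows "x * w \<in> words (Suc n)"
proof -
  obtain b b' m a \<beta> where w_eq: "w = b * word m a \<beta> * b'"
    and b: "b \<in> B" "b' \<in> B" and m: "m \<le> n" and l: "word_letters m a \<beta>"
    using w unfolding words_def by blast
  show ?thesis
  proof (cases m)
    case 0
    have "x * w = 1 * word (Suc 0) (\<lambda>_. x) (\<lambda>_. 0) * (b * b')"
      using 0 w_eq by (simp add: mult.assoc)
    then show ?thesis
      unfolding words_def word_letters_def using x b one_B mult_B by fastforce
  next
    case (Suc k)
    let ?a = "case_nat x a" and ?\<beta> = "case_nat b \<beta>"
    have "x * w = 1 * word (Suc m) ?a ?\<beta> * b'"
      using Suc w_eq by (simp add: word_Suc_Suc comp_def mult.assoc)
    moreover have "word_letters (Suc m) ?a ?\<beta>"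
      using Suc x b l by (simp add: word_letters_Suc_Suc comp_def)
    ultimately show ?thesis
      unfolding words_def using m b(2) one_B by fastforce
  qed
qed

lemma mult_A_word:
  assumes "x \<in> A" and l: "word_letters (Suc n) a b"
  shows "x * word (Suc n) a b \<in> words (Suc n)"
proof -
  have "x * word (Suc n) a b = word (Suc n) (a(0 := x * a 0)) b"
    by (cases n) (simp_all add: word_Suc_Suc comp_def mult.assoc)
  moreover have "word_letters (Suc n) (a(0 := x * a 0)) b"
    using assms mult_A unfolding word_letters_def by auto
  ultimately show ?thesis
    using word_in_words by simp
qed

lemma mult_B_span_words: "b \<in> B \<Longrightarrow> y \<in> span (words n) \<Longrightarrow> b * y \<in> span (words n)"
  by (rule mult_left_span) (auto intro: span_base mult_B_words)

lemma mult_A_span_words: "x \<in> A \<Longrightarrow> y \<in> span (words n) \<Longrightarrow> x * y \<in> span (words (Suc n))"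
  by (rule mult_left_span) (auto intro: span_base mult_A_words)

lemma generated_subalgebra_subset_span_words:
  "generated_subalgebra smul (A \<union> B) \<subseteq> span (\<Union>n. words n)"
proof (rule generated_subalgebra_subset)
  show "1 \<in> span (\<Union>n. words n)"
    using one_B B_subset_words by (blast intro: span_base)
  fix x v assume x: "x \<in> A \<union> B" and v: "v \<in> span (\<Union>n. words n)"
  have "x * w \<in> span (\<Union>n. words n)" if "w \<in> words n" for w n
  proof -
    have "x * w \<in> words (Suc n) \<or> x * w \<in> words n"
      using x that mult_A_words mult_B_words by blast
    then show ?thesis
      by (blast intro: span_base)
  qed
  then show "x * v \<in> span (\<Union>n. words n)"
    by (intro mult_left_span[OF _ v]) blast
qed simp

lemma word_minus_alt_word:
  assumes \<rho>: "\<rho> ` A \<subseteq> B" and \<psi>: "\<psi> ` B \<subseteq> A" and "word_letters (Suc n) a \<beta>"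
  shows "word (Suc n) a \<beta> - alt_word \<rho> \<psi> (Suc n) a \<beta> \<in> span (words n)"
  using assms(3)
proof (induction n arbitrary: a \<beta>)
  case 0
  then have "\<rho> (a 0) \<in> words 0"
    using \<rho> B_subset_words unfolding word_letters_def by blast
  then show ?case by (simp add: span_base)
next
  case (Suc n)
  define W where "W = word (Suc n) (a \<circ> Suc) (\<beta> \<circ> Suc)"
  define D where "D = W - alt_word \<rho> \<psi> (Suc n) (a \<circ> Suc) (\<beta> \<circ> Suc)"
  have l: "word_letters (Suc n) (a \<circ> Suc) (\<beta> \<circ> Suc)" and a0: "a 0 \<in> A" and b0: "\<beta> 0 \<in> B"
    using Suc.prems by (simp_all add: word_letters_Suc_Suc)
  have \<rho>a0: "\<rho> (a 0) \<in> B" and \<psi>b0: "\<psi> (\<beta> 0) \<in> A" and a0\<psi>b0: "a 0 * \<psi> (\<beta> 0) \<in> A"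
    using a0 b0 \<rho> \<psi> mult_A by blast+
  have D: "D \<in> span (words n)"
    unfolding D_def W_def using Suc.IH[OF l] .
  have "word (Suc (Suc n)) a \<beta> - alt_word \<rho> \<psi> (Suc (Suc n)) a \<beta> =
      (a 0 * \<psi> (\<beta> 0)) * W + \<rho> (a 0) * (\<beta> 0 * W) - \<rho> (a 0) * (\<psi> (\<beta> 0) * W)
      + (a 0 * (\<beta> 0 * D) - (a 0 * \<psi> (\<beta> 0)) * D - \<rho> (a 0) * (\<beta> 0 * D) + \<rho> (a 0) * (\<psi> (\<beta> 0) * D))"
    unfolding word_Suc_Suc alt_word_Suc_Suc D_def W_def by (simp add: algebra_simps)
  also have "\<dots> \<in> span (words (Suc n))"
  proof -
    have "W \<in> words (Suc n)"
      unfolding W_def using l by (rule word_in_words)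
    then have "(a 0 * \<psi> (\<beta> 0)) * W \<in> words (Suc n)" "\<rho> (a 0) * (\<beta> 0 * W) \<in> words (Suc n)"
      "\<rho> (a 0) * (\<psi> (\<beta> 0) * W) \<in> words (Suc n)"
      unfolding W_def using l a0\<psi>b0 \<psi>b0 b0 \<rho>a0 by (simp_all add: mult_A_word mult_B_words)
    moreover have "\<beta> 0 * D \<in> span (words n)" "\<psi> (\<beta> 0) * D \<in> span (words (Suc n))"
      using D b0 \<psi>b0 by (simp_all add: mult_B_span_words mult_A_span_words)
    then have "a 0 * (\<beta> 0 * D) \<in> span (words (Suc n))" "(a 0 * \<psi> (\<beta> 0)) * D \<in> span (words (Suc n))"
      "\<rho> (a 0) * (\<beta> 0 * D) \<in> span (words (Suc n))" "\<rho> (a 0) * (\<psi> (\<beta> 0) * D) \<in> span (words (Suc n))"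
      using D a0 a0\<psi>b0 \<rho>a0 span_mono[OF words_mono[of n "Suc n"]]
      by (auto simp: mult_A_span_words mult_B_span_words)
    ultimately show ?thesis
      by (intro span_add span_diff) (auto intro: span_base)
  qed
  finally show ?case .
qed

end

locale liberation = subalgebra_pair smul A B
  for smul :: "complex \<Rightarrow> 'c::ring_1 \<Rightarrow> 'c" and A B +
  fixes \<rho> \<psi> e :: "'c \<Rightarrow> 'c"
  assumes rho_into: "\<rho> ` A \<subseteq> B" and psi_into: "\<psi> ` B \<subseteq> A"
    and linear_e: "linear_on smul UNIV e"
    and right_liberated: "right_liberated A B e \<rho> \<psi>"
begin

sublocale e: module_hom smul smul e
  using linear_e unfolding module_hom_iff linear_on_def by (simp add: module_axioms)

lemma e_bimodule: "b \<in> B \<Longrightarrow> b' \<in> B \<Longrightarrow> e (b * y * b') = b * e y * b'"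
  using right_liberated unfolding right_liberated_def by blast

lemma e_alt_word: "word_letters (Suc n) a b \<Longrightarrow> e (alt_word \<rho> \<psi> (Suc n) a b) = 0"
  using right_liberated unfolding right_liberated_def word_letters_def
  by (auto dest!: spec[of _ "Suc n"])

lemma image_span_subset: "e ` X \<subseteq> e ` B \<Longrightarrow> e ` span X \<subseteq> e ` B"
  using e.span_image[of X] span_minimal[of "e ` X" "e ` B"]
    e.subspace_image[OF subspace_subalgebra[OF subalgebra_B]]
  by simp

lemma image_span_words: "e ` span (words n) \<subseteq> e ` B"
proof (induction n rule: less_induct)
  case (less n)
  have "e x \<in> e ` B" if "x \<in> words n" for x
  proof -
    obtain b b' m a \<beta> where x: "x = b * word m a \<beta> * b'"
      and b: "b \<in> B" "b' \<in> B" and m: "m \<le> n" and l: "word_letters m a \<beta>"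
      using \<open>x \<in> words n\<close> unfolding words_def by blast
    show ?thesis
    proof (cases m)
      case 0
      then show ?thesis using x b mult_B by simp
    next
      case (Suc k)
      have "word m a \<beta> - alt_word \<rho> \<psi> m a \<beta> \<in> span (words k)"
        using Suc l rho_into psi_into by (simp add: word_minus_alt_word)
      then obtain u where u: "u \<in> B" "e (word m a \<beta> - alt_word \<rho> \<psi> m a \<beta>) = e u"
        using less.IH[of k] Suc m by fastforce
      then have "e (word m a \<beta>) = e u"
        using Suc l by (simp add: e.diff e_alt_word)
      then have "e x = e (b * u * b')"
        using x b u by (simp add: e_bimodule)
      then show ?thesis
        using b u mult_B by blast
    qed
  qed
  then show ?case
    by (intro image_span_subset) blast
qed

lemma image_generated_subalgebra: "e ` generated_subalgebra smul (A \<union> B) = e ` B"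
proof
  have "e ` (\<Union>n. words n) \<subseteq> e ` B"
    using image_span_words span_superset by blast
  then show "e ` generated_subalgebra smul (A \<union> B) \<subseteq> e ` B"
    using generated_subalgebra_subset_span_words image_span_subset by blast
  show "e ` B \<subseteq> e ` generated_subalgebra smul (A \<union> B)"
    unfolding generated_subalgebra_def by blast
qed

end

theorem corollary2p7:
  fixes smul :: "complex \<Rightarrow> 'c::ring_1 \<Rightarrow> 'c"
    and A B :: "'c set"
    and \<rho> \<psi> e :: "'c \<Rightarrow> 'c"
  assumes "complex_algebra smul"
    and "subalgebra smul A" and "subalgebra smul B"
    and "\<rho> ` A \<subseteq> B" and "linear_on smul A \<rho>"
    and "\<psi> ` B \<subseteq> A" and "linear_on smul B \<psi>"
    and "linear_on smul UNIV e"
    and "right_liberated A B e \<rho> \<psi>"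
  shows "e ` generated_subalgebra smul (A \<union> B) = e ` B"
proof -
  interpret liberation smul A B \<rho> \<psi> e
    using assms by unfold_locales
  show ?thesis
    by (rule image_generated_subalgebra)
qed

end
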